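(* Let $m,n\in\mathbb{N}$, $0<\ell\le\infty$, let $J$ be an $m\times m$ matrix with $J^*=-J$, and $H_1(x)=H_1(x)^*$, $H_0(x)=H_0(x)^*$ be $m\times m$ matrix functions locally summable on $[0,\ell)$. Let $A$, $S(0)=S(0)^*$ be $n\times n$ and $\Pi(0)$ be $n\times m$ matrices with $AS(0)-S(0)A^*=\Pi(0)J\Pi(0)^*$, and define $\Pi(x),S(x)$ by $\Pi'=-A\Pi JH_1-\Pi JH_0$, $S'=\Pi JH_1J^*\Pi^*$. Then for every $h\in\mathbb{C}^n$ the vector function $$\widetilde z(x,t)=J\Pi(x)^*S(x)^{-1}\mathrm{e}^{-tA}h$$ satisfies, at points of invertibility of $S(x)$, $$\frac{\partial}{\partial x}\widetilde z(x,t)=J\Big(-H_1(x)\frac{\partial}{\partial t}\widetilde z(x,t)+\widetilde H_0(x)\widetilde z(x,t)\Big),$$ where $\widetilde H_0=H_0-X^*H_1-H_1X$ and $X=J\Pi^*S^{-1}\Pi$.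
   Context: This is the GBDT-transformed version of the dynamical system $\partial_xz=J(-H_1\partial_tz+H_0z)$. *)

theory Defs
  imports "HOL-Analysis.Analysis"
begin

definition cadj :: "complex^'n^'m \<Rightarrow> complex^'m^'n" where
  "cadj M = (\<chi> i j. cnj (M $ j $ i))"

definition mpow :: "complex^'n^'n \<Rightarrow> nat \<Rightarrow> complex^'n^'n" where
  "mpow A k = (((**) A) ^^ k) (mat 1)"

definition mexp :: "complex^'n^'n \<Rightarrow> complex^'n^'n" where
  "mexp A = (\<Sum>k. (1 / fact k) *\<^sub>R mpow A k)"

end

theory Submission
  imports Defs
begin

text \<open>Write \<open>z = J \<Pi>\<^sup>* S\<^sup>-\<^sup>1 e\<^sup>-\<^sup>t\<^sup>A h\<close>. Differentiating in \<open>x\<close> with the product rule and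
  \<open>(S\<^sup>-\<^sup>1)' = - S\<^sup>-\<^sup>1 S' S\<^sup>-\<^sup>1\<close> produces a term \<open>A\<^sup>* S\<^sup>-\<^sup>1\<close>; the operator identity
  \<open>A S - S A\<^sup>* = \<Pi> J \<Pi>\<^sup>*\<close> turns it into \<open>S\<^sup>-\<^sup>1 A - S\<^sup>-\<^sup>1 \<Pi> J \<Pi>\<^sup>* S\<^sup>-\<^sup>1\<close>, and
  \<open>A e\<^sup>-\<^sup>t\<^sup>A h = - \<partial>\<^sub>t e\<^sup>-\<^sup>t\<^sup>A h\<close> converts the first part into \<open>- J H\<^sub>1 \<partial>\<^sub>t z\<close>; what is
  left is \<open>J H0t z\<close> with \<open>H0t = H\<^sub>0 - X\<^sup>* H\<^sub>1 - H\<^sub>1 X\<close>.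

  The operator identity persists along \<open>x\<close> because both sides have the same derivative
  \<open>\<Pi>' J \<Pi>\<^sup>* + \<Pi> J \<Pi>'\<^sup>* = A S' - S' A\<^sup>*\<close>. Since \<open>H\<^sub>0, H\<^sub>1\<close> are only locally summable,
  \<open>\<Pi>\<close> and \<open>S\<close> are merely absolutely continuous: the derivatives exist at the Lebesgue
  points of the integrands, i.e. almost everywhere, and preservation of the identity
  needs the product rule for indefinite Lebesgue integrals.\<close>

section \<open>Indefinite integrals\<close>

lemma has_vector_derivative_iff_difference_quotient:
  fixes f :: "real \<Rightarrow> 'a::real_normed_vector"
  shows "(f has_vector_derivative D) (at x) \<longleftrightarrow> ((\<lambda>y. (f y - f x) /\<^sub>R (y - x)) \<longlongrightarrow> D) (at x)"
proof -
  have "\<forall>\<^sub>F y in at x. norm (f y - f x - (y - x) *\<^sub>R D) / norm (y - x) = norm ((f y - f x) /\<^sub>R (y - x) - D)"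
  proof (rule eventually_mono[OF eventually_neq_at_within[of x x UNIV]])
    fix y :: real assume "y \<noteq> x"
    then have "(f y - f x) /\<^sub>R (y - x) - D = (f y - f x - (y - x) *\<^sub>R D) /\<^sub>R (y - x)"
      by (simp add: scaleR_diff_right)
    then show "norm (f y - f x - (y - x) *\<^sub>R D) / norm (y - x) = norm ((f y - f x) /\<^sub>R (y - x) - D)"
      by (simp add: divide_inverse mult.commute)
  qed
  then show ?thesis
    unfolding has_vector_derivative_def has_derivative_iff_norm
    by (simp add: bounded_linear_scaleR_left tendsto_cong tendsto_norm_zero_iff LIM_zero_iff)
qed

lemma indefinite_integral_diff:
  fixes f :: "real \<Rightarrow> 'b::banach"
  assumes "f integrable_on {a..b}" "a \<le> s" "s \<le> t" "t \<le> b"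
  shows "integral {a..t} f - integral {a..s} f = integral {s..t} f"
  using Henstock_Kurzweil_Integration.integral_combine[where a=a and c=s and b=t and f=f]
    integrable_on_subinterval[OF assms(1), of a t] assms
  by (simp add: algebra_simps)

lemma has_vector_derivative_if_one_sided_quotients:
  fixes F :: "real \<Rightarrow> 'a::real_normed_vector"
  assumes right: "\<And>e. 0 < e \<Longrightarrow> \<exists>d>0. \<forall>h. 0 < h \<and> h < d \<longrightarrow> norm ((F (x + h) - F x) /\<^sub>R h - D) < e"
    and left: "\<And>e. 0 < e \<Longrightarrow> \<exists>d>0. \<forall>h. 0 < h \<and> h < d \<longrightarrow> norm ((F x - F (x - h)) /\<^sub>R h - D) < e"
  shows "(F has_vector_derivative D) (at x)"
  unfolding has_vector_derivative_iff_difference_quotient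
proof (rule filterlim_split_at_real)
  show "((\<lambda>y. (F y - F x) /\<^sub>R (y - x)) \<longlongrightarrow> D) (at_right x)"
    unfolding tendsto_iff eventually_at_right_field dist_norm
  proof (intro allI impI)
    fix e :: real assume "0 < e"
    then obtain d where "d > 0" "\<forall>h. 0 < h \<and> h < d \<longrightarrow> norm ((F (x + h) - F x) /\<^sub>R h - D) < e"
      using right by blast
    then show "\<exists>c>x. \<forall>y>x. y < c \<longrightarrow> norm ((F y - F x) /\<^sub>R (y - x) - D) < e"
      by (intro exI[of _ "x + d"]) (auto dest: spec[of _ "_ - x"])
  qed
  show "((\<lambda>y. (F y - F x) /\<^sub>R (y - x)) \<longlongrightarrow> D) (at_left x)"
    unfolding tendsto_iff eventually_at_left_field dist_norm
  proof (intro allI impI)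
    fix e :: real assume "0 < e"
    then obtain d where "d > 0" and d: "\<forall>h. 0 < h \<and> h < d \<longrightarrow> norm ((F x - F (x - h)) /\<^sub>R h - D) < e"
      using left by blast
    have swap: "(F y - F x) /\<^sub>R (y - x) = (F x - F y) /\<^sub>R (x - y)" for y
      by (simp only: minus_diff_eq[symmetric, of "F x" "F y"] minus_diff_eq[symmetric, of x y]
          inverse_minus_eq scaleR_minus_left scaleR_minus_right minus_minus)
    show "\<exists>c<x. \<forall>y>c. y < x \<longrightarrow> norm ((F y - F x) /\<^sub>R (y - x) - D) < e"
    proof (intro exI[of _ "x - d"] conjI allI impI)
      fix y assume "x - d < y" "y < x"
      then show "norm ((F y - F x) /\<^sub>R (y - x) - D) < e"
        using d[rule_format, of "x - y"] by (simp add: swap)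
    qed (use \<open>d > 0\<close> in simp)
  qed
qed

lemma indefinite_integral_has_vector_derivative_ae:
  fixes f :: "real \<Rightarrow> 'b::euclidean_space"
  assumes f: "f integrable_on {a..b}"
  obtains N where "negligible N"
    "\<And>x. x \<in> {a<..<b} \<Longrightarrow> x \<notin> N \<Longrightarrow> ((\<lambda>y. integral {a..y} f) has_vector_derivative f x) (at x)"
proof -
  define g where "g y = (if y \<in> {a..b} then f y else 0)" for y
  have g_int: "g integrable_on cbox c d" for c d
    unfolding g_def integrable_restrict_Int cbox_interval Int_atLeastAtMost
    by (rule integrable_on_subinterval[OF f]) auto
  have g_reflect_int: "(\<lambda>y. g (- y)) integrable_on cbox c d" for c d
    using g_int[of "-d" "-c"]
      Henstock_Kurzweil_Integration.integrable_reflect_real[where f=g and a="-d" and b="-c"]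
    by (simp add: cbox_interval)
  \<comment> \<open>The library controls only averages over \<open>[x, x + h]\<close>;
    those over \<open>[x - h, x]\<close> come from reflecting \<open>g\<close>.\<close>
  obtain N1 where N1: "negligible N1" and right: "\<And>x e. x \<notin> N1 \<Longrightarrow> 0 < e \<Longrightarrow>
      \<exists>d>0. \<forall>h. 0 < h \<and> h < d \<longrightarrow> norm (integral {x..x + h} g /\<^sub>R h - g x) < e"
    using integrable_ccontinuous_explicit[of g, OF g_int] by (simp add: cbox_interval) blast
  obtain N2 where N2: "negligible N2" and left: "\<And>x e. x \<notin> N2 \<Longrightarrow> 0 < e \<Longrightarrow>
      \<exists>d>0. \<forall>h. 0 < h \<and> h < d \<longrightarrow> norm (integral {x..x + h} (\<lambda>y. g (- y)) /\<^sub>R h - g (- x)) < e"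
    using integrable_ccontinuous_explicit[of "\<lambda>y. g (- y)", OF g_reflect_int]
    by (simp add: cbox_interval) blast
  have "negligible (uminus ` N2)"
    using N2 by (intro negligible_differentiable_image_negligible) (auto intro: differentiable_on_minus)
  then show ?thesis
  proof (rule that[OF negligible_Un[OF N1]])
    fix x assume x: "x \<in> {a<..<b}" "x \<notin> N1 \<union> uminus ` N2"
    then have "x \<notin> N1" "- x \<notin> N2" "g x = f x"
      by (auto simp: image_iff g_def)
    have g_f: "integral {s..t} g = integral {s..t} f" if "a \<le> s" "t \<le> b" for s t
      using that by (intro integral_cong) (auto simp: g_def)
    show "((\<lambda>y. integral {a..y} f) has_vector_derivative f x) (at x)"
    proof (rule has_vector_derivative_if_one_sided_quotients)
      fix e :: real assume "0 < e"
      obtain d where "d > 0" and d: "\<forall>h. 0 < h \<and> h < d \<longrightarrow> norm (integral {x..x + h} g /\<^sub>R h - g x) < e"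
        using right[OF \<open>x \<notin> N1\<close> \<open>0 < e\<close>] by blast
      have "integral {a..x + h} f - integral {a..x} f = integral {x..x + h} g"
        if "0 < h" "h < b - x" for h
        using that x by (simp add: indefinite_integral_diff[OF f] g_f)
      with d \<open>g x = f x\<close> \<open>d > 0\<close> x show "\<exists>d>0. \<forall>h. 0 < h \<and> h < d \<longrightarrow>
          norm ((integral {a..x + h} f - integral {a..x} f) /\<^sub>R h - f x) < e"
        by (intro exI[of _ "min d (b - x)"]) auto
    next
      fix e :: real assume "0 < e"
      obtain d where "d > 0" and d: "\<forall>h. 0 < h \<and> h < d \<longrightarrow>
          norm (integral {- x..- x + h} (\<lambda>y. g (- y)) /\<^sub>R h - g x) < e"
        using left[OF \<open>- x \<notin> N2\<close> \<open>0 < e\<close>] by auto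
      have "integral {a..x} f - integral {a..x - h} f = integral {- x..- x + h} (\<lambda>y. g (- y))"
        if "0 < h" "h < x - a" for h
        using that x
          Henstock_Kurzweil_Integration.integral_reflect_real[where f=g and a="x - h" and b=x]
        by (simp add: indefinite_integral_diff[OF f] g_f)
      with d \<open>g x = f x\<close> \<open>d > 0\<close> x show "\<exists>d>0. \<forall>h. 0 < h \<and> h < d \<longrightarrow>
          norm ((integral {a..x} f - integral {a..x - h} f) /\<^sub>R h - f x) < e"
        by (intro exI[of _ "min d (x - a)"]) auto
    qed
  qed
qed

lemma norm_diff_le_if_small_increments_le:
  fixes D :: "real \<Rightarrow> 'a::real_normed_vector" and \<mu> :: "real \<Rightarrow> real"
  assumes "a \<le> b" "\<delta> > 0"
    and increments: "\<And>s t. a \<le> s \<Longrightarrow> s \<le> t \<Longrightarrow> t \<le> b \<Longrightarrow> t - s < \<delta> \<Longrightarrow> norm (D t - D s) \<le> \<mu> t - \<mu> s"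
  shows "norm (D b - D a) \<le> \<mu> b - \<mu> a"
proof -
  obtain n :: nat where n: "(b - a) / \<delta> < real n"
    using reals_Archimedean2 by blast
  moreover have "0 \<le> (b - a) / \<delta>"
    using assms by simp
  ultimately have "n > 0" by linarith
  define q where "q = (b - a) / real n"
  define u where "u k = a + real k * q" for k
  have "q < \<delta>" "0 \<le> q"
    using n \<open>n > 0\<close> assms by (simp_all add: q_def field_simps)
  moreover have "u (Suc k) = u k + q" for k
    by (simp add: u_def distrib_right)
  ultimately have u_step: "a \<le> u k" "u k \<le> u (Suc k)" "u (Suc k) - u k < \<delta>" for k
    by (auto simp: u_def)
  have u_le: "u k \<le> b" if "k \<le> n" for k
  proof -
    have "real k * q \<le> real n * q"
      using that \<open>0 \<le> q\<close> by (intro mult_right_mono) auto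
    then show ?thesis
      using \<open>n > 0\<close> by (simp add: u_def q_def)
  qed
  have "norm (D b - D a) = norm (\<Sum>k<n. D (u (Suc k)) - D (u k))"
    using sum_lessThan_telescope[of "\<lambda>k. D (u k)" n] \<open>n > 0\<close> by (simp add: u_def q_def)
  also have "\<dots> \<le> (\<Sum>k<n. \<mu> (u (Suc k)) - \<mu> (u k))"
    using u_step u_le by (intro order_trans[OF norm_sum] sum_mono increments) auto
  also have "\<dots> = \<mu> b - \<mu> a"
    using sum_lessThan_telescope[of "\<lambda>k. \<mu> (u k)" n] \<open>n > 0\<close> by (simp add: u_def q_def)
  finally show ?thesis .
qed

lemma eq_if_increments_dominated:
  fixes D :: "real \<Rightarrow> 'a::real_normed_vector" and \<mu> :: "real \<Rightarrow> real"
  assumes "a \<le> b"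
    and dominated: "\<And>\<epsilon>. \<epsilon> > 0 \<Longrightarrow> \<exists>\<delta>>0. \<forall>s t. a \<le> s \<and> s \<le> t \<and> t \<le> b \<and> t - s < \<delta> \<longrightarrow>
                 norm (D t - D s) \<le> \<epsilon> * (\<mu> t - \<mu> s)"
  shows "D b = D a"
proof -
  define c where "c = \<bar>\<mu> b - \<mu> a\<bar> + 1"
  have "c > 0" by (simp add: c_def add_nonneg_pos)
  have "norm (D b - D a) \<le> 0 + e" if "e > 0" for e
  proof -
    obtain \<delta> where "\<delta> > 0" and \<delta>: "\<forall>s t. a \<le> s \<and> s \<le> t \<and> t \<le> b \<and> t - s < \<delta> \<longrightarrow>
        norm (D t - D s) \<le> e / c * \<mu> t - e / c * \<mu> s"
      using dominated[of "e / c"] \<open>c > 0\<close> \<open>e > 0\<close> by (auto simp: right_diff_distrib)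
    have "norm (D b - D a) \<le> e / c * \<mu> b - e / c * \<mu> a"
      using \<delta> by (intro norm_diff_le_if_small_increments_le[OF \<open>a \<le> b\<close> \<open>\<delta> > 0\<close>]) auto
    also have "\<dots> = e / c * (\<mu> b - \<mu> a)"
      by (simp add: right_diff_distrib)
    also have "\<dots> \<le> e / c * c"
      using \<open>c > 0\<close> \<open>e > 0\<close> by (intro mult_left_mono) (auto simp: c_def)
    finally show ?thesis
      using \<open>c > 0\<close> by simp
  qed
  then have "norm (D b - D a) \<le> 0"
    by (rule field_le_epsilon)
  then show ?thesis
    by simp
qed

lemma continuous_on_indefinite_integral_plus:
  fixes f :: "real \<Rightarrow> 'b::banach"
  assumes "f integrable_on {a..b}" "\<And>y. y \<in> {a..b} \<Longrightarrow> F y = c + integral {a..y} f"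
  shows "continuous_on {a..b} F"
  using continuous_on_add[OF continuous_on_const indefinite_integral_continuous_1[OF assms(1)]]
  by (rule continuous_on_eq) (use assms(2) in auto)

lemma absolutely_integrable_bilinear_continuous:
  fixes P :: "'a::euclidean_space \<Rightarrow> 'b::euclidean_space \<Rightarrow> 'c::euclidean_space"
    and M :: "real \<Rightarrow> 'a"
  assumes "bilinear P" "continuous_on {a..b} M" "f absolutely_integrable_on {a..b}"
  shows "(\<lambda>y. P (M y) (f y)) absolutely_integrable_on {a..b}"
proof (rule absolutely_integrable_bounded_measurable_product[OF assms(1) _ _ _ assms(3)])
  show "M \<in> borel_measurable (lebesgue_on {a..b})"
    using assms(2) fmeasurableD[OF lmeasurable_interval(1)]
    by (rule continuous_imp_measurable_on_sets_lebesgue)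
  show "bounded (M ` {a..b})"
    using assms(2) by (intro compact_imp_bounded compact_continuous_image) auto
qed simp

lemma bounded_bilinear_has_integral_increment:
  assumes "bounded_bilinear P"
    and "(f has_integral F t - F s) S" and "(g has_integral G t - G s) S"
  shows "((\<lambda>y. P (f y) (G t) + P (F s) (g y)) has_integral P (F t) (G t) - P (F s) (G s)) S"
proof -
  interpret P: bounded_bilinear P by fact
  from has_integral_add[OF has_integral_linear[OF assms(2) P.bounded_linear_left[of "G t"]]
      has_integral_linear[OF assms(3) P.bounded_linear_right[of "F s"]]]
  show ?thesis
    by (simp add: o_def P.diff_left P.diff_right)
qed

lemma bounded_bilinear_integral_increment_small:
  fixes P :: "'a::real_normed_vector \<Rightarrow> 'b::real_normed_vector \<Rightarrow> 'c::banach"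
    and f F :: "real \<Rightarrow> 'a" and g G :: "real \<Rightarrow> 'b"
  assumes P: "bounded_bilinear P" and "\<epsilon> > 0"
    and Fc: "continuous_on {a..b} F" and Gc: "continuous_on {a..b} G"
    and fg: "(\<lambda>y. norm (f y) + norm (g y)) integrable_on {a..b}"
    and increment: "\<And>s t. a \<le> s \<Longrightarrow> s \<le> t \<Longrightarrow> t \<le> b \<Longrightarrow>
      (\<lambda>y. P (f y) (G t - G y) + P (F s - F y) (g y)) integrable_on {s..t}"
  obtains \<delta> where "\<delta> > 0" "\<And>s t. a \<le> s \<Longrightarrow> s \<le> t \<Longrightarrow> t \<le> b \<Longrightarrow> t - s < \<delta> \<Longrightarrow>
    norm (integral {s..t} (\<lambda>y. P (f y) (G t - G y) + P (F s - F y) (g y)))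
      \<le> \<epsilon> * integral {s..t} (\<lambda>y. norm (f y) + norm (g y))"
proof -
  interpret P: bounded_bilinear P by (rule P)
  obtain K where "K > 0" and K: "\<And>u v. norm (P u v) \<le> norm u * norm v * K"
    using P.pos_bounded by blast
  have "\<epsilon> / K > 0" using \<open>\<epsilon> > 0\<close> \<open>K > 0\<close> by simp
  then obtain \<delta>F \<delta>G where "\<delta>F > 0" "\<delta>G > 0"
    and \<delta>F: "\<forall>y\<in>{a..b}. \<forall>y'\<in>{a..b}. dist y' y < \<delta>F \<longrightarrow> dist (F y') (F y) < \<epsilon> / K"
    and \<delta>G: "\<forall>y\<in>{a..b}. \<forall>y'\<in>{a..b}. dist y' y < \<delta>G \<longrightarrow> dist (G y') (G y) < \<epsilon> / K"
    using compact_uniformly_continuous[OF Fc] compact_uniformly_continuous[OF Gc]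
    unfolding uniformly_continuous_on_def by (metis compact_Icc)
  show ?thesis
  proof (rule that[of "min \<delta>F \<delta>G"])
    fix s t assume st: "a \<le> s" "s \<le> t" "t \<le> b" "t - s < min \<delta>F \<delta>G"
    have "norm (P (f y) (G t - G y) + P (F s - F y) (g y)) \<le> \<epsilon> * (norm (f y) + norm (g y))"
      if "y \<in> {s..t}" for y
    proof -
      have close: "norm (G t - G y) \<le> \<epsilon> / K" "norm (F s - F y) \<le> \<epsilon> / K"
        using \<delta>G[rule_format, of y t] \<delta>F[rule_format, of y s] that st by (auto simp: dist_norm)
      have "norm (P (f y) (G t - G y) + P (F s - F y) (g y))
          \<le> norm (f y) * norm (G t - G y) * K + norm (F s - F y) * norm (g y) * K"
        by (intro order_trans[OF norm_triangle_ineq] add_mono K)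
      also have "\<dots> \<le> norm (f y) * (\<epsilon> / K) * K + (\<epsilon> / K) * norm (g y) * K"
        using close \<open>K > 0\<close> by (intro add_mono mult_right_mono mult_left_mono) auto
      also have "\<dots> = \<epsilon> * (norm (f y) + norm (g y))"
        using \<open>K > 0\<close> by (simp add: field_simps)
      finally show ?thesis .
    qed
    moreover have "(\<lambda>y. \<epsilon> * (norm (f y) + norm (g y))) integrable_on {s..t}"
      using integrable_cmul[OF integrable_on_subinterval[OF fg], of s t \<epsilon>] st by simp
    ultimately have "norm (integral {s..t} (\<lambda>y. P (f y) (G t - G y) + P (F s - F y) (g y)))
        \<le> integral {s..t} (\<lambda>y. \<epsilon> * (norm (f y) + norm (g y)))"
      using increment[OF st(1-3)] by (intro integral_norm_bound_integral) auto
    then show "norm (integral {s..t} (\<lambda>y. P (f y) (G t - G y) + P (F s - F y) (g y)))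
        \<le> \<epsilon> * integral {s..t} (\<lambda>y. norm (f y) + norm (g y))"
      by simp
  qed (use \<open>\<delta>F > 0\<close> \<open>\<delta>G > 0\<close> in simp)
qed

lemma indefinite_integral_product_rule:
  fixes P :: "'a::euclidean_space \<Rightarrow> 'b::euclidean_space \<Rightarrow> 'c::euclidean_space"
    and f F :: "real \<Rightarrow> 'a" and g G :: "real \<Rightarrow> 'b"
  assumes P: "bounded_bilinear P" and "a \<le> b"
    and f: "f absolutely_integrable_on {a..b}" and g: "g absolutely_integrable_on {a..b}"
    and F: "\<And>y. y \<in> {a..b} \<Longrightarrow> F y = F a + integral {a..y} f"
    and G: "\<And>y. y \<in> {a..b} \<Longrightarrow> G y = G a + integral {a..y} g"
  shows "((\<lambda>y. P (f y) (G y) + P (F y) (g y)) has_integral P (F b) (G b) - P (F a) (G a)) {a..b}"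
proof -
  interpret P: bounded_bilinear P by (rule P)
  have "bilinear P"
    using P by (simp add: bilinear_conv_bounded_bilinear)
  then have "bilinear (\<lambda>v u. P u v)"
    by (simp add: bilinear_def)
  have fi: "f integrable_on {a..b}" and gi: "g integrable_on {a..b}"
    using f g set_lebesgue_integral_eq_integral(1) by blast+
  have Fc: "continuous_on {a..b} F"
    by (rule continuous_on_indefinite_integral_plus[OF fi F])
  have Gc: "continuous_on {a..b} G"
    by (rule continuous_on_indefinite_integral_plus[OF gi G])
  define \<phi> where "\<phi> y = P (f y) (G y) + P (F y) (g y)" for y
  have "\<phi> absolutely_integrable_on {a..b}"
    unfolding \<phi>_def
    using set_integral_add(1)[OF
        absolutely_integrable_bilinear_continuous[OF \<open>bilinear (\<lambda>v u. P u v)\<close> Gc f]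
        absolutely_integrable_bilinear_continuous[OF \<open>bilinear P\<close> Fc g]]
    by simp
  then have \<phi>i: "\<phi> integrable_on {a..b}"
    using set_lebesgue_integral_eq_integral(1) by blast
  define h where "h y = norm (f y) + norm (g y)" for y
  have hi: "h integrable_on {a..b}"
    using f g unfolding h_def[abs_def] by (simp add: absolutely_integrable_on_def integrable_add)
  define D where "D y = P (F y) (G y) - integral {a..y} \<phi>" for y
  \<comment> \<open>for every \<open>\<epsilon>\<close>, short increments of \<open>D\<close> are below \<open>\<epsilon>\<close> times those of
    \<open>\<integral> h\<close>, so \<open>D\<close> is constant\<close>
  have D_increment: "((\<lambda>y. P (f y) (G t - G y) + P (F s - F y) (g y)) has_integral D t - D s) {s..t}"
    if "a \<le> s" "s \<le> t" "t \<le> b" for s t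
  proof -
    have "(f has_integral F t - F s) {s..t}" "(g has_integral G t - G s) {s..t}"
      using F[of t] F[of s] G[of t] G[of s] that integrable_on_subinterval[OF fi, of s t]
        integrable_on_subinterval[OF gi, of s t]
      by (simp_all add: indefinite_integral_diff[OF fi that, symmetric]
          indefinite_integral_diff[OF gi that, symmetric] has_integral_integral)
    from has_integral_diff[OF bounded_bilinear_has_integral_increment[OF P this]
        integrable_integral[OF integrable_on_subinterval[OF \<phi>i, of s t]]]
    have "((\<lambda>y. P (f y) (G t) + P (F s) (g y) - \<phi> y) has_integral D t - D s) {s..t}"
      using that by (simp add: D_def indefinite_integral_diff[OF \<phi>i that, symmetric] algebra_simps)
    then show ?thesis
      by (simp add: \<phi>_def P.diff_left P.diff_right algebra_simps)
  qed
  have dominated: "\<exists>\<delta>>0. \<forall>s t. a \<le> s \<and> s \<le> t \<and> t \<le> b \<and> t - s < \<delta> \<longrightarrow>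
      norm (D t - D s) \<le> \<epsilon> * (integral {a..t} h - integral {a..s} h)" if "\<epsilon> > 0" for \<epsilon>
  proof -
    obtain \<delta> where "\<delta> > 0" and \<delta>: "\<And>s t. a \<le> s \<Longrightarrow> s \<le> t \<Longrightarrow> t \<le> b \<Longrightarrow> t - s < \<delta> \<Longrightarrow>
        norm (integral {s..t} (\<lambda>y. P (f y) (G t - G y) + P (F s - F y) (g y))) \<le> \<epsilon> * integral {s..t} h"
      using bounded_bilinear_integral_increment_small[OF P \<open>\<epsilon> > 0\<close> Fc Gc hi[unfolded h_def[abs_def]]]
        D_increment unfolding h_def[abs_def] by blast
    show ?thesis
    proof (intro exI[of _ \<delta>] conjI allI impI \<open>\<delta> > 0\<close>)
      fix s t assume "a \<le> s \<and> s \<le> t \<and> t \<le> b \<and> t - s < \<delta>"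
      with \<delta>[of s t] D_increment[of s t]
      show "norm (D t - D s) \<le> \<epsilon> * (integral {a..t} h - integral {a..s} h)"
        by (simp add: integral_unique indefinite_integral_diff[OF hi])
    qed
  qed
  have "D b = D a"
    by (rule eq_if_increments_dominated[OF \<open>a \<le> b\<close> dominated])
  then have "P (F b) (G b) - P (F a) (G a) = integral {a..b} \<phi>"
    by (simp add: D_def) (metis diff_eq_eq add.commute)
  then show ?thesis
    using \<phi>i unfolding \<phi>_def by (simp add: has_integral_integral)
qed

section \<open>Exponential series\<close>

lemma summable_exp_series:
  fixes C :: "nat \<Rightarrow> 'a::banach"
  assumes C: "\<And>k. norm (C k) \<le> c * B ^ k" and "0 \<le> B"
  shows "summable (\<lambda>k. (s ^ k / fact k) *\<^sub>R C k)"
proof (rule summable_comparison_test)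
  show "summable (\<lambda>k. c * ((\<bar>s\<bar> * B) ^ k / fact k))"
    using summable_exp_generic[of "\<bar>s\<bar> * B"]
    by (intro summable_mult) (simp add: divide_inverse mult.commute)
  show "\<exists>N. \<forall>k\<ge>N. norm ((s ^ k / fact k) *\<^sub>R C k) \<le> c * ((\<bar>s\<bar> * B) ^ k / fact k)"
  proof (intro exI allI impI)
    fix k
    have "\<bar>s\<bar> ^ k * norm (C k) \<le> \<bar>s\<bar> ^ k * (c * B ^ k)"
      using C by (intro mult_left_mono) auto
    then show "norm ((s ^ k / fact k) *\<^sub>R C k) \<le> c * ((\<bar>s\<bar> * B) ^ k / fact k)"
      by (simp add: abs_mult power_abs power_mult_distrib divide_right_mono mult_ac)
  qed
qed

lemma has_vector_derivative_series_termwise: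
  fixes f d :: "nat \<Rightarrow> real \<Rightarrow> 'a::banach"
  assumes "r > 0"
    and f: "\<And>k s. s \<in> ball t r \<Longrightarrow> (f k has_vector_derivative d k s) (at s)"
    and d: "\<And>k s. s \<in> ball t r \<Longrightarrow> norm (d k s) \<le> M k" and "summable M"
    and "summable (\<lambda>k. f k t)"
  shows "((\<lambda>s. \<Sum>k. f k s) has_vector_derivative (\<Sum>k. d k t)) (at t)"
proof -
  have "uniform_limit (ball t r) (\<lambda>n s. \<Sum>i<n. d i s) (\<lambda>s. \<Sum>i. d i s) sequentially"
    by (rule Weierstrass_m_test[OF d \<open>summable M\<close>])
  then have uniform: "\<forall>\<^sub>F n in sequentially. \<forall>s\<in>ball t r. \<forall>h.
      norm ((\<Sum>i<n. h *\<^sub>R d i s) - h *\<^sub>R (\<Sum>i. d i s)) \<le> e * norm h" if "e > 0" for e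
  proof -
    have "\<forall>\<^sub>F n in sequentially. \<forall>s\<in>ball t r. norm ((\<Sum>i<n. d i s) - (\<Sum>i. d i s)) < e"
      using uniform_limitD[OF \<open>uniform_limit _ _ _ _\<close> that] by (simp add: dist_norm)
    then show ?thesis
    proof (rule eventually_mono, intro ballI allI)
      fix n s h assume "\<forall>s\<in>ball t r. norm ((\<Sum>i<n. d i s) - (\<Sum>i. d i s)) < e" "s \<in> ball t r"
      then have "\<bar>h\<bar> * norm ((\<Sum>i<n. d i s) - (\<Sum>i. d i s)) \<le> \<bar>h\<bar> * e"
        by (intro mult_left_mono) (auto intro: less_imp_le)
      then show "norm ((\<Sum>i<n. h *\<^sub>R d i s) - h *\<^sub>R (\<Sum>i. d i s)) \<le> e * norm h"
        by (simp add: mult.commute flip: scaleR_sum_right scaleR_diff_right)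
    qed
  qed
  have "(f n has_derivative (\<lambda>h. h *\<^sub>R d n s)) (at s within ball t r)" if "s \<in> ball t r" for n s
    using f[OF that] by (simp add: has_vector_derivative_def has_derivative_at_withinI)
  from has_derivative_series[OF convex_ball this uniform _ summable_sums[OF \<open>summable (\<lambda>k. f k t)\<close>]]
  obtain g where g: "\<forall>s\<in>ball t r. (\<lambda>n. f n s) sums g s \<and>
      (g has_derivative (\<lambda>h. h *\<^sub>R (\<Sum>i. d i s))) (at s within ball t r)"
    using \<open>r > 0\<close> by auto
  show ?thesis
  proof (rule has_vector_derivative_transform_within_open[where S="ball t r"])
    have "(g has_derivative (\<lambda>h. h *\<^sub>R (\<Sum>i. d i t))) (at t within ball t r)"
      using g \<open>r > 0\<close> by simp
    moreover have "at t within ball t r = at t"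
      using \<open>r > 0\<close> by (intro at_within_open) auto
    ultimately show "(g has_vector_derivative (\<Sum>i. d i t)) (at t)"
      unfolding has_vector_derivative_def by simp
  qed (use g sums_unique \<open>r > 0\<close> in fastforce)+
qed

lemma has_vector_derivative_exp_series:
  fixes C :: "nat \<Rightarrow> 'a::banach"
  assumes C: "\<And>k. norm (C k) \<le> c * B ^ k" and "0 \<le> B"
  shows "((\<lambda>s. \<Sum>k. (s ^ k / fact k) *\<^sub>R C k) has_vector_derivative
           (\<Sum>k. (t ^ k / fact k) *\<^sub>R C (Suc k))) (at t)"
proof -
  define R where "R = \<bar>t\<bar> + 1"
  define d where "d k s = (of_nat k * s ^ (k - 1) / fact k) *\<^sub>R C k" for k s
  define M where "M k = c * ((2 * R * B) ^ k / fact k)" for k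
  have "summable M"
    unfolding M_def using summable_exp_generic[of "2 * R * B"]
    by (intro summable_mult) (simp add: divide_inverse mult.commute)
  have d_bound: "norm (d k s) \<le> M k" if "s \<in> ball t 1" for k s
  proof -
    have R: "\<bar>s\<bar> \<le> R" "1 \<le> R" using that by (auto simp: R_def dist_real_def)
    have "\<bar>s\<bar> ^ (k - 1) \<le> R ^ k"
      using power_mono[OF R(1), of "k - 1"] power_increasing[OF _ R(2), of "k - 1" k] by simp
    moreover have "real k \<le> 2 ^ k"
      by (metis less_exp less_imp_le of_nat_le_iff of_nat_numeral of_nat_power)
    ultimately have "of_nat k * \<bar>s\<bar> ^ (k - 1) * norm (C k) \<le> (2 ^ k * R ^ k) * (c * B ^ k)"
      using C[of k] \<open>0 \<le> B\<close> R by (intro mult_mono) auto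
    then show ?thesis
      unfolding M_def d_def
      by (simp add: abs_mult power_abs power_mult_distrib divide_right_mono mult_ac)
  qed
  moreover have "((\<lambda>s. (s ^ k / fact k) *\<^sub>R C k) has_vector_derivative d k s) (at s)" for k s
    unfolding d_def by (auto intro!: derivative_eq_intros)
  ultimately have "((\<lambda>s. \<Sum>k. (s ^ k / fact k) *\<^sub>R C k) has_vector_derivative (\<Sum>k. d k t)) (at t)"
    using summable_exp_series[OF C \<open>0 \<le> B\<close>] \<open>summable M\<close>
    by (intro has_vector_derivative_series_termwise[where r=1 and M=M]) auto
  moreover have "(\<Sum>k. d k t) = (\<Sum>k. (t ^ k / fact k) *\<^sub>R C (Suc k))"
  proof -
    have "summable (\<lambda>k. d k t)"
      by (rule summable_comparison_test[OF _ \<open>summable M\<close>]) (use d_bound in auto)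
    moreover have "d (Suc k) t = (t ^ k / fact k) *\<^sub>R C (Suc k)" for k
      by (simp add: d_def divide_simps)
    ultimately show ?thesis
      using suminf_split_head[of "\<lambda>k. d k t"] by (simp add: d_def)
  qed
  ultimately show ?thesis by simp
qed

section \<open>Complex matrices\<close>

lemma bilinear_matrix_matrix_mult:
  "bilinear ((**) :: complex^'n^'m \<Rightarrow> complex^'k^'n \<Rightarrow> complex^'k^'m)"
  unfolding bilinear_def linear_iff
  by (auto simp: matrix_add_ldistrib vec_eq_iff matrix_matrix_mult_def sum_distrib_left
      scaleR_sum_right algebra_simps sum.distrib)

lemma bounded_bilinear_matrix_matrix_mult:
  "bounded_bilinear ((**) :: complex^'n^'m \<Rightarrow> complex^'k^'n \<Rightarrow> complex^'k^'m)"
  using bilinear_matrix_matrix_mult by (simp add: bilinear_conv_bounded_bilinear)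

lemma bounded_bilinear_matrix_vector_mult:
  "bounded_bilinear ((*v) :: complex^'n^'m \<Rightarrow> complex^'n \<Rightarrow> complex^'m)"
proof -
  have "bilinear ((*v) :: complex^'n^'m \<Rightarrow> complex^'n \<Rightarrow> complex^'m)"
    unfolding bilinear_def linear_iff
    by (auto simp: vec_eq_iff matrix_vector_mult_def sum_distrib_left
        scaleR_sum_right algebra_simps sum.distrib)
  then show ?thesis
    by (simp add: bilinear_conv_bounded_bilinear)
qed

lemma matrix_mult_uminus_left: "(- (A::'a::ring_1^'n^'m)) ** B = - (A ** B)"
  by (simp add: vec_eq_iff matrix_matrix_mult_def sum_negf)

lemma matrix_mult_uminus_right: "(A::'a::ring_1^'n^'m) ** (- B) = - (A ** B)"
  by (simp add: vec_eq_iff matrix_matrix_mult_def sum_negf)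

lemma matrix_mult_diff_left: "((A::'a::ring_1^'n^'m) - B) ** C = A ** C - B ** C"
  by (simp add: vec_eq_iff matrix_matrix_mult_def sum_subtractf algebra_simps)

lemma matrix_mult_diff_right: "(A::'a::ring_1^'n^'m) ** (B - C) = A ** B - A ** C"
  by (simp add: vec_eq_iff matrix_matrix_mult_def sum_subtractf algebra_simps)

lemma matrix_add_rdistrib: "((A::'a::ring_1^'n^'m) + B) ** C = A ** C + B ** C"
  by (simp add: vec_eq_iff matrix_matrix_mult_def sum.distrib algebra_simps)

lemma matrix_mult_scaleR_right: "(A::complex^'n^'m) ** (c *\<^sub>R B) = c *\<^sub>R (A ** B)"
  by (simp add: matrix_scalar_ac scalar_matrix_assoc)

lemma matrix_vector_mult_uminus_left: "(- (A::'a::ring_1^'n^'m)) *v v = - (A *v v)"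
  by (simp add: vec_eq_iff matrix_vector_mult_def sum_negf)

lemmas matrix_mult_ring_simps =
  matrix_mult_uminus_left matrix_mult_uminus_right matrix_mult_diff_left matrix_mult_diff_right
  matrix_add_ldistrib matrix_add_rdistrib matrix_vector_mult_uminus_left

lemma matrix_inv_right: "invertible A \<Longrightarrow> A ** matrix_inv A = mat 1"
  and matrix_inv_left: "invertible A \<Longrightarrow> matrix_inv A ** A = mat 1"
  unfolding invertible_def matrix_inv_def by (metis (mono_tags, lifting) someI_ex)+

lemma cadj_mult: "cadj ((A::complex^'n^'m) ** (B::complex^'k^'n)) = cadj B ** cadj A"
  by (simp add: cadj_def vec_eq_iff matrix_matrix_mult_def mult.commute)

lemma cadj_add: "cadj ((A::complex^'n^'m) + B) = cadj A + cadj B"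
  and cadj_diff: "cadj (A - B) = cadj A - cadj B"
  and cadj_uminus: "cadj (- A) = - cadj A"
  and cadj_scaleR: "cadj (c *\<^sub>R A) = c *\<^sub>R cadj A"
  and cadj_cadj: "cadj (cadj A) = A"
  by (simp_all add: cadj_def vec_eq_iff)

lemma cadj_mat_1: "cadj (mat 1 :: complex^'n^'n) = mat 1"
  by (simp add: cadj_def vec_eq_iff mat_def)

lemma bounded_linear_cadj: "bounded_linear (cadj :: complex^'n^'m \<Rightarrow> complex^'m^'n)"
  by (simp add: linear_conv_bounded_linear[symmetric] linear_iff cadj_add cadj_scaleR)

lemma cadj_matrix_inv:
  assumes "invertible (S::complex^'n^'n)" "cadj S = S"
  shows "cadj (matrix_inv S) = matrix_inv S"
proof -
  have "cadj (matrix_inv S) ** S = mat 1"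
    using arg_cong[OF matrix_inv_right[OF assms(1)], of cadj] assms(2)
    by (simp add: cadj_mult cadj_mat_1)
  then have "cadj (matrix_inv S) ** (S ** matrix_inv S) = matrix_inv S"
    by (simp add: matrix_mul_assoc)
  then show ?thesis
    using matrix_inv_right[OF assms(1)] by simp
qed

lemma invertible_add_small:
  fixes M \<Delta> :: "complex^'n^'n"
  assumes "invertible M" and "0 \<le> K"
    and K_mv: "\<And>(P :: complex^'n^'n) v. norm (P *v v) \<le> norm P * norm v * K"
    and small: "norm (matrix_inv M) * norm \<Delta> * K\<^sup>2 \<le> 1 / 2"
  shows "invertible (M + \<Delta>)"
proof -
  define N where "N = matrix_inv M"
  \<comment> \<open>\<open>M + \<Delta> = M (1 + N \<Delta>)\<close> with \<open>N \<Delta>\<close> a contraction\<close>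
  have "v = 0" if v: "(M + \<Delta>) *v v = 0" for v
  proof -
    have "M *v v = - (\<Delta> *v v)"
      using v by (simp add: matrix_vector_mult_add_rdistrib eq_neg_iff_add_eq_0)
    then have "N *v (M *v v) = - (N *v (\<Delta> *v v))"
      by (simp add: vec.neg)
    then have "v = - (N *v (\<Delta> *v v))"
      using assms(1) by (simp add: matrix_vector_mul_assoc N_def matrix_inv_left)
    then have "norm v = norm (N *v (\<Delta> *v v))"
      by (metis norm_minus_cancel)
    also have "\<dots> \<le> norm N * norm (\<Delta> *v v) * K"
      by (rule K_mv)
    also have "\<dots> \<le> norm N * (norm \<Delta> * norm v * K) * K"
      using \<open>0 \<le> K\<close> by (intro mult_right_mono mult_left_mono K_mv) auto
    also have "\<dots> = (norm N * norm \<Delta> * K\<^sup>2) * norm v"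
      by (simp add: power2_eq_square)
    also have "\<dots> \<le> 1 / 2 * norm v"
      using small by (intro mult_right_mono) (auto simp: N_def)
    finally show "v = 0" by simp
  qed
  then obtain B where "B ** (M + \<Delta>) = mat 1"
    using matrix_left_invertible_ker by blast
  then show ?thesis
    unfolding invertible_def using matrix_left_right_inverse by blast
qed

lemma norm_matrix_inv_add_diff_le:
  fixes M \<Delta> :: "complex^'n^'n"
  assumes "invertible M" "invertible (M + \<Delta>)" and "0 \<le> K"
    and K_mm: "\<And>(P :: complex^'n^'n) (Q :: complex^'n^'n). norm (P ** Q) \<le> norm P * norm Q * K"
    and small: "norm (matrix_inv M) * norm \<Delta> * K\<^sup>2 \<le> 1 / 2"
  shows "norm (matrix_inv (M + \<Delta>) - matrix_inv M) \<le> 2 * K\<^sup>2 * (norm (matrix_inv M))\<^sup>2 * norm \<Delta>"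
proof -
  define N where "N = matrix_inv M"
  define X where "X = matrix_inv (M + \<Delta>)"
  have "N ** ((M + \<Delta>) ** X) = N"
    using matrix_inv_right[OF assms(2)] by (simp add: X_def)
  then have X_N: "X - N = - (N ** \<Delta> ** X)"
    using matrix_inv_left[OF assms(1)]
    by (simp add: matrix_add_ldistrib matrix_add_rdistrib matrix_mul_assoc N_def algebra_simps)
  have "norm (N ** \<Delta> ** X) \<le> norm (N ** \<Delta>) * norm X * K"
    by (rule K_mm)
  also have "\<dots> \<le> (norm N * norm \<Delta> * K) * norm X * K"
    using \<open>0 \<le> K\<close> by (intro mult_right_mono K_mm) auto
  finally have bound: "norm (N ** \<Delta> ** X) \<le> (norm N * norm \<Delta> * K\<^sup>2) * norm X"
    by (simp add: power2_eq_square mult_ac)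
  have "norm X \<le> norm N + norm (N ** \<Delta> ** X)"
    using X_N by (metis add_diff_cancel_left' diff_add_cancel norm_minus_cancel norm_triangle_ineq)
  also have "\<dots> \<le> norm N + 1/2 * norm X"
    using bound mult_right_mono[OF small norm_ge_zero, of X] by (simp add: N_def)
  finally have "norm X \<le> 2 * norm N" by simp
  then have "(norm N * norm \<Delta> * K\<^sup>2) * norm X \<le> (norm N * norm \<Delta> * K\<^sup>2) * (2 * norm N)"
    by (intro mult_left_mono) auto
  then show ?thesis
    using X_N bound by (simp add: X_def N_def[symmetric] power2_eq_square mult_ac)
qed

lemma matrix_inv_perturbation:
  fixes M :: "complex^'n^'n"
  assumes "invertible M"
  obtains d C where "d > 0" "\<And>\<Delta>. norm \<Delta> < d \<Longrightarrow>
    invertible (M + \<Delta>) \<and> norm (matrix_inv (M + \<Delta>) - matrix_inv M) \<le> C * norm \<Delta>"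
proof -
  obtain K1 where "K1 > 0"
    and K1: "\<And>(P::complex^'n^'n) (Q::complex^'n^'n). norm (P ** Q) \<le> norm P * norm Q * K1"
    using bounded_bilinear.pos_bounded[OF bounded_bilinear_matrix_matrix_mult] by blast
  obtain K2 where K2: "\<And>(P::complex^'n^'n) (v::complex^'n). norm (P *v v) \<le> norm P * norm v * K2"
    using bounded_bilinear.pos_bounded[OF bounded_bilinear_matrix_vector_mult] by blast
  define K where "K = max K1 K2"
  have "K > 0" using \<open>K1 > 0\<close> by (simp add: K_def)
  have K_mm: "norm (P ** Q) \<le> norm P * norm Q * K" for P Q :: "complex^'n^'n"
    using order_trans[OF K1 mult_left_mono[OF max.cobounded1]] by (simp add: K_def)
  have K_mv: "norm (P *v v) \<le> norm P * norm v * K" for P :: "complex^'n^'n" and v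
    using order_trans[OF K2 mult_left_mono[OF max.cobounded2]] by (simp add: K_def)
  define c where "c = (norm (matrix_inv M) + 1) * K\<^sup>2"
  have "c > 0"
    using \<open>K > 0\<close> unfolding c_def by (intro mult_pos_pos add_nonneg_pos) auto
  have "norm (matrix_inv M) * norm \<Delta> * K\<^sup>2 \<le> 1 / 2" if "norm \<Delta> < 1 / (2 * c)" for \<Delta> :: "complex^'n^'n"
  proof -
    have "norm (matrix_inv M) * norm \<Delta> * K\<^sup>2 \<le> c * norm \<Delta>"
      by (simp add: c_def algebra_simps)
    also have "\<dots> \<le> c * (1 / (2 * c))"
      using that \<open>c > 0\<close> by (intro mult_left_mono) auto
    finally show ?thesis
      using \<open>c > 0\<close> by simp
  qed
  with invertible_add_small[OF assms _ K_mv] norm_matrix_inv_add_diff_le[OF assms _ _ K_mm]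
    \<open>K > 0\<close> \<open>c > 0\<close> show ?thesis
    by (intro that[of "1 / (2 * c)" "2 * K\<^sup>2 * (norm (matrix_inv M))\<^sup>2"]) auto
qed

lemma has_vector_derivative_matrix_inv:
  fixes S :: "real \<Rightarrow> complex^'n^'n"
  assumes S: "(S has_vector_derivative S') (at x)" and inv: "invertible (S x)"
  shows "((\<lambda>y. matrix_inv (S y)) has_vector_derivative
            - (matrix_inv (S x) ** S' ** matrix_inv (S x))) (at x)"
proof -
  define N where "N = matrix_inv (S x)"
  obtain d C where "d > 0" and dC: "\<And>\<Delta>. norm \<Delta> < d \<Longrightarrow>
      invertible (S x + \<Delta>) \<and> norm (matrix_inv (S x + \<Delta>) - N) \<le> C * norm \<Delta>"
    using matrix_inv_perturbation[OF inv] unfolding N_def by blast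
  have S_lim: "(S \<longlongrightarrow> S x) (at x)"
    using has_vector_derivative_continuous[OF S] by (simp add: isCont_def)
  then have "\<forall>\<^sub>F y in at x. norm (S y - S x) < d"
    using \<open>d > 0\<close> unfolding tendsto_iff dist_norm by blast
  then have near: "\<forall>\<^sub>F y in at x. invertible (S y) \<and> norm (matrix_inv (S y) - N) \<le> C * norm (S y - S x)"
    by (rule eventually_mono) (use dC in fastforce)
  have "((\<lambda>y. C * norm (S y - S x)) \<longlongrightarrow> 0) (at x)"
    using S_lim by (simp add: LIM_zero tendsto_mult_right_zero tendsto_norm_zero)
  then have "((\<lambda>y. matrix_inv (S y) - N) \<longlongrightarrow> 0) (at x)"
    by (rule Lim_null_comparison[rotated]) (use near in \<open>auto elim: eventually_mono\<close>)
  then have "((\<lambda>y. matrix_inv (S y)) \<longlongrightarrow> N) (at x)"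
    by (simp add: LIM_zero_iff)
  moreover have "((\<lambda>y. (S y - S x) /\<^sub>R (y - x)) \<longlongrightarrow> S') (at x)"
    using S has_vector_derivative_iff_difference_quotient by blast
  ultimately have lim: "((\<lambda>y. - (N ** ((S y - S x) /\<^sub>R (y - x)) ** matrix_inv (S y)))
      \<longlongrightarrow> - (N ** S' ** N)) (at x)"
    by (intro tendsto_minus bounded_bilinear.tendsto[OF bounded_bilinear_matrix_matrix_mult] tendsto_const)
  \<comment> \<open>the resolvent identity \<open>S\<^sub>y\<^sup>-\<^sup>1 - S\<^sub>x\<^sup>-\<^sup>1 = S\<^sub>x\<^sup>-\<^sup>1 (S\<^sub>x - S\<^sub>y) S\<^sub>y\<^sup>-\<^sup>1\<close>\<close>
  have "\<forall>\<^sub>F y in at x. - (N ** ((S y - S x) /\<^sub>R (y - x)) ** matrix_inv (S y)) =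
      (matrix_inv (S y) - N) /\<^sub>R (y - x)"
    using near
  proof (rule eventually_mono)
    fix y assume "invertible (S y) \<and> norm (matrix_inv (S y) - N) \<le> C * norm (S y - S x)"
    then have "- (N ** (S y - S x) ** matrix_inv (S y)) = matrix_inv (S y) - N"
      using matrix_inv_right[of "S y"] matrix_inv_left[OF inv]
      by (simp add: matrix_mult_diff_left matrix_mult_diff_right N_def flip: matrix_mul_assoc)
    moreover have "N ** ((S y - S x) /\<^sub>R (y - x)) ** matrix_inv (S y) =
        (N ** (S y - S x) ** matrix_inv (S y)) /\<^sub>R (y - x)"
      by (simp add: matrix_scalar_ac scalar_matrix_assoc)
    ultimately show "- (N ** ((S y - S x) /\<^sub>R (y - x)) ** matrix_inv (S y))
        = (matrix_inv (S y) - N) /\<^sub>R (y - x)"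
      by (metis scaleR_minus_right)
  qed
  from Lim_transform_eventually[OF lim this] show ?thesis
    unfolding has_vector_derivative_iff_difference_quotient N_def .
qed

lemma mpow_Suc: "mpow A (Suc k) = A ** mpow A k"
  by (simp add: mpow_def)

lemma norm_mpow_le:
  obtains c B where "\<And>k. norm (mpow (A::complex^'n^'n) k) \<le> c * B ^ k" "0 \<le> B"
proof -
  obtain K where "K > 0"
    and K: "\<And>(P::complex^'n^'n) (Q::complex^'n^'n). norm (P ** Q) \<le> norm P * norm Q * K"
    using bounded_bilinear.pos_bounded[OF bounded_bilinear_matrix_matrix_mult] by blast
  have "norm (mpow A k) \<le> norm (mat 1 :: complex^'n^'n) * (K * norm A) ^ k" for k
  proof (induction k)
    case (Suc k)
    have "norm (mpow A (Suc k)) \<le> norm A * norm (mpow A k) * K"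
      unfolding mpow_Suc by (rule K)
    also have "\<dots> \<le> norm A * (norm (mat 1 :: complex^'n^'n) * (K * norm A) ^ k) * K"
      using Suc \<open>K > 0\<close> by (intro mult_right_mono mult_left_mono) auto
    finally show ?case by (simp add: algebra_simps)
  qed (simp add: mpow_def)
  then show ?thesis
    using \<open>K > 0\<close> by (intro that[of "norm (mat 1 :: complex^'n^'n)" "K * norm A"]) auto
qed

lemma mexp_scaleR: "mexp (s *\<^sub>R A) = (\<Sum>k. (s ^ k / fact k) *\<^sub>R mpow A k)"
proof -
  have "mpow (s *\<^sub>R A) k = s ^ k *\<^sub>R mpow A k" for k
    by (induction k)
      (simp_all add: mpow_def matrix_mult_scaleR_right scalar_matrix_assoc[symmetric] mult.commute)
  then show ?thesis
    by (simp add: mexp_def divide_inverse mult.commute)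
qed

lemma has_vector_derivative_mexp_uminus:
  fixes A :: "complex^'n^'n"
  shows "((\<lambda>s. mexp ((- s) *\<^sub>R A)) has_vector_derivative - (A ** mexp ((- t) *\<^sub>R A))) (at t)"
proof -
  obtain c B where cB: "\<And>k. norm (mpow A k) \<le> c * B ^ k" "0 \<le> B"
    using norm_mpow_le by blast
  let ?E = "\<lambda>u. \<Sum>k. (u ^ k / fact k) *\<^sub>R mpow A k"
  have "(?E has_vector_derivative (\<Sum>k. ((- t) ^ k / fact k) *\<^sub>R mpow A (Suc k))) (at (- t))"
    by (rule has_vector_derivative_exp_series[OF cB])
  moreover have "(\<Sum>k. ((- t) ^ k / fact k) *\<^sub>R mpow A (Suc k)) = A ** ?E (- t)"
    using bounded_linear.suminf[OF bounded_bilinear.bounded_linear_right[OF bounded_bilinear_matrix_matrix_mult]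
        summable_exp_series[OF cB], symmetric]
    by (simp add: mpow_Suc matrix_mult_scaleR_right)
  ultimately have "((?E \<circ> uminus) has_vector_derivative (- 1) *\<^sub>R (A ** ?E (- t))) (at t)"
    by (intro vector_diff_chain_at) (auto intro!: derivative_eq_intros)
  then show ?thesis
    unfolding mexp_scaleR by (simp add: o_def)
qed

section \<open>The transformed system\<close>

lemma cadj_matrix_inv_comm:
  fixes A S :: "complex^'n^'n" and P :: "complex^'m^'n" and J :: "complex^'m^'m"
  assumes inv: "invertible S" and identity: "A ** S - S ** cadj A = P ** J ** cadj P"
  shows "cadj A ** matrix_inv S = matrix_inv S ** A - matrix_inv S ** P ** J ** cadj P ** matrix_inv S"
proof -
  define G where "G = matrix_inv S"
  have SG: "S ** G = mat 1" "G ** S = mat 1"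
    using inv by (simp_all add: G_def matrix_inv_right matrix_inv_left)
  have "G ** (A ** S - S ** cadj A) ** G = G ** A ** (S ** G) - (G ** S) ** cadj A ** G"
    by (simp add: matrix_mult_diff_left matrix_mult_diff_right matrix_mul_assoc)
  also have "\<dots> = G ** A - cadj A ** G"
    by (simp add: SG)
  finally show ?thesis
    using identity by (simp add: G_def matrix_mul_assoc algebra_simps)
qed

text \<open>For \<open>E = e\<^sup>-\<^sup>t\<^sup>A\<close>, the left-hand side is the \<open>x\<close>-derivative of
  \<open>J \<Pi>\<^sup>* S\<^sup>-\<^sup>1 E h\<close> (product rule, \<open>(S\<^sup>-\<^sup>1)' = - S\<^sup>-\<^sup>1 S' S\<^sup>-\<^sup>1\<close> and the equations for
  \<open>\<Pi>'\<close>, \<open>S'\<close>); the right-hand side is \<open>J (- H\<^sub>1 \<partial>\<^sub>t z + H0t z)\<close>.\<close>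

lemma transformed_equation_identity:
  fixes J H1 H0 :: "complex^'m^'m" and A S E :: "complex^'n^'n" and P :: "complex^'m^'n"
    and h :: "complex^'n"
  assumes J: "cadj J = - J" and H1: "cadj H1 = H1" and H0: "cadj H0 = H0"
    and inv: "invertible S" and herm: "cadj S = S"
    and identity: "A ** S - S ** cadj A = P ** J ** cadj P"
  defines "G \<equiv> matrix_inv S" and "X \<equiv> J ** cadj P ** matrix_inv S ** P"
  shows "J *v (cadj P *v (- (G ** (P ** J ** H1 ** cadj J ** cadj P) ** G) *v (E *v h))
            + cadj (- (A ** P ** J ** H1) - P ** J ** H0) *v (G *v (E *v h)))
     = J *v (- (H1 *v (J *v (cadj P *v (G *v (- (A ** E) *v h)))))
          + (H0 - cadj X ** H1 - H1 ** X) *v (J *v (cadj P *v (G *v (E *v h)))))"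
proof -
  define w where "w = E *v h"
  define z where "z = J *v (cadj P *v (G *v w))"
  have "cadj G = G"
    using cadj_matrix_inv[OF inv herm] by (simp add: G_def)
  have comm: "cadj A *v (G *v w) = G *v (A *v w) - G *v (P *v (J *v (cadj P *v (G *v w))))"
    using arg_cong[OF cadj_matrix_inv_comm[OF inv identity], of "\<lambda>M. M *v w"]
    by (simp add: G_def matrix_vector_mult_diff_rdistrib flip: matrix_vector_mul_assoc)
  have adj_rhs: "cadj (- (A ** P ** J ** H1) - P ** J ** H0)
      = H1 ** J ** cadj P ** cadj A + H0 ** J ** cadj P"
    by (simp add: cadj_diff cadj_uminus cadj_mult J H1 H0 matrix_mult_ring_simps matrix_mul_assoc)
  have adj_X: "cadj (J ** cadj P ** G ** P) = - (cadj P ** G ** P ** J)"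
    by (simp add: cadj_mult cadj_cadj J \<open>cadj G = G\<close> matrix_mult_ring_simps matrix_mul_assoc)
  have lhs1: "(- (G ** (P ** J ** H1 ** cadj J ** cadj P) ** G)) *v w = G *v (P *v (J *v (H1 *v z)))"
    by (simp add: z_def J matrix_mult_ring_simps vec.neg flip: matrix_vector_mul_assoc)
  have lhs2: "(H1 ** J ** cadj P ** cadj A + H0 ** J ** cadj P) *v (G *v w)
      = H1 *v (J *v (cadj P *v (G *v (A *v w)))) - H1 *v (J *v (cadj P *v (G *v (P *v z)))) + H0 *v z"
    by (simp add: z_def matrix_vector_mult_add_rdistrib comm vec.diff flip: matrix_vector_mul_assoc)
  have rhs1: "- (H1 *v (J *v (cadj P *v (G *v (- (A ** E) *v h)))))
      = H1 *v (J *v (cadj P *v (G *v (A *v w))))"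
    by (simp add: w_def matrix_mult_ring_simps matrix_vector_mul_assoc vec.neg)
  have rhs2: "(H0 - (- (cadj P ** G ** P ** J)) ** H1 - H1 ** (J ** cadj P ** G ** P)) *v z
      = H0 *v z + cadj P *v (G *v (P *v (J *v (H1 *v z)))) - H1 *v (J *v (cadj P *v (G *v (P *v z))))"
    by (simp add: matrix_vector_mult_diff_rdistrib matrix_vector_mult_add_rdistrib matrix_mult_ring_simps
        flip: matrix_vector_mul_assoc)
  show ?thesis
    unfolding X_def G_def[symmetric] w_def[symmetric] adj_rhs adj_X lhs1 lhs2 z_def[symmetric] rhs1 rhs2
    by (simp add: vec.add vec.diff algebra_simps)
qed

lemma transformed_solution_has_vector_derivative:
  fixes J H1 H0 :: "complex^'m^'m" and A :: "complex^'n^'n" and h :: "complex^'n"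
    and Pi :: "real \<Rightarrow> complex^'m^'n" and S :: "real \<Rightarrow> complex^'n^'n"
  assumes J: "cadj J = - J" and H1: "cadj H1 = H1" and H0: "cadj H0 = H0"
    and inv: "invertible (S x)" and herm: "cadj (S x) = S x"
    and identity: "A ** S x - S x ** cadj A = Pi x ** J ** cadj (Pi x)"
    and Pi': "(Pi has_vector_derivative - (A ** Pi x ** J ** H1) - Pi x ** J ** H0) (at x)"
    and S': "(S has_vector_derivative Pi x ** J ** H1 ** cadj J ** cadj (Pi x)) (at x)"
  shows "let z = (\<lambda>y t::real. J *v (cadj (Pi y) *v (matrix_inv (S y) *v (mexp ((- t) *\<^sub>R A) *v h))));
          X = J ** cadj (Pi x) ** matrix_inv (S x) ** Pi x;
          H0t = H0 - cadj X ** H1 - H1 ** X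
      in \<forall>t::real. \<exists>zx zt.
           ((\<lambda>y. z y t) has_vector_derivative zx) (at x) \<and>
           ((\<lambda>s. z x s) has_vector_derivative zt) (at t) \<and>
           zx = J *v (- (H1 *v zt) + H0t *v z x t)"
  unfolding Let_def
proof
  fix t :: real
  define E where "E = mexp ((- t) *\<^sub>R A)"
  define G where "G = matrix_inv (S x)"
  note mv = bounded_bilinear_matrix_vector_mult
  have "((\<lambda>y. matrix_inv (S y) *v (E *v h)) has_vector_derivative
      (- (G ** (Pi x ** J ** H1 ** cadj J ** cadj (Pi x)) ** G)) *v (E *v h)) (at x)"
    using has_vector_derivative_matrix_inv[OF S' inv]
    by (intro bounded_linear.has_vector_derivative[OF bounded_bilinear.bounded_linear_left[OF mv]])
      (simp add: G_def)
  from bounded_bilinear.has_vector_derivative[OF mv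
      bounded_linear.has_vector_derivative[OF bounded_linear_cadj Pi'] this]
  have z_x: "((\<lambda>y. J *v (cadj (Pi y) *v (matrix_inv (S y) *v (E *v h)))) has_vector_derivative
      J *v (cadj (Pi x) *v (- (G ** (Pi x ** J ** H1 ** cadj J ** cadj (Pi x)) ** G) *v (E *v h))
        + cadj (- (A ** Pi x ** J ** H1) - Pi x ** J ** H0) *v (G *v (E *v h)))) (at x)"
    by (intro bounded_linear.has_vector_derivative[OF matrix_vector_mul_bounded_linear])
      (simp add: G_def add.commute)
  have "bounded_linear (\<lambda>M::complex^'n^'n. J *v (cadj (Pi x) *v (G *v (M *v h))))"
    by (intro bounded_linear_compose[OF matrix_vector_mul_bounded_linear]
        bounded_bilinear.bounded_linear_left[OF mv])
  from bounded_linear.has_vector_derivative[OF this has_vector_derivative_mexp_uminus[of A t]]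
  have "((\<lambda>s. J *v (cadj (Pi x) *v (G *v (mexp ((- s) *\<^sub>R A) *v h)))) has_vector_derivative
      J *v (cadj (Pi x) *v (G *v ((- (A ** E)) *v h)))) (at t)"
    by (simp add: E_def)
  with z_x show "\<exists>zx zt.
      ((\<lambda>y. J *v (cadj (Pi y) *v (matrix_inv (S y) *v (mexp ((- t) *\<^sub>R A) *v h))))
        has_vector_derivative zx) (at x) \<and>
      ((\<lambda>s. J *v (cadj (Pi x) *v (matrix_inv (S x) *v (mexp ((- s) *\<^sub>R A) *v h))))
        has_vector_derivative zt) (at t) \<and>
      zx = J *v (- (H1 *v zt) + (H0 - cadj (J ** cadj (Pi x) ** matrix_inv (S x) ** Pi x) ** H1 -
        H1 ** (J ** cadj (Pi x) ** matrix_inv (S x) ** Pi x)) *v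
        (J *v (cadj (Pi x) *v (matrix_inv (S x) *v (mexp ((- t) *\<^sub>R A) *v h)))))"
    using transformed_equation_identity[OF J H1 H0 inv herm identity, of E h]
    unfolding E_def G_def by blast
qed

locale gbdt_system =
  fixes l :: ereal
    and J :: "complex^'m^'m"
    and H1 H0 :: "real \<Rightarrow> complex^'m^'m"
    and A S0 :: "complex^'n^'n"
    and Pi0 :: "complex^'m^'n"
    and Pi :: "real \<Rightarrow> complex^'m^'n"
    and S :: "real \<Rightarrow> complex^'n^'n"
  assumes l_pos: "0 < l"
    and J_skew: "cadj J = - J"
    and H1_herm: "\<And>x. 0 \<le> x \<Longrightarrow> ereal x < l \<Longrightarrow> cadj (H1 x) = H1 x"
    and H0_herm: "\<And>x. 0 \<le> x \<Longrightarrow> ereal x < l \<Longrightarrow> cadj (H0 x) = H0 x"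
    and H1_loc: "\<And>r. 0 \<le> r \<Longrightarrow> ereal r < l \<Longrightarrow> H1 absolutely_integrable_on {0..r}"
    and H0_loc: "\<And>r. 0 \<le> r \<Longrightarrow> ereal r < l \<Longrightarrow> H0 absolutely_integrable_on {0..r}"
    and S0_herm: "cadj S0 = S0"
    and identity: "A ** S0 - S0 ** cadj A = Pi0 ** J ** cadj Pi0"
    and Pi_ode: "\<And>x. 0 \<le> x \<Longrightarrow> ereal x < l \<Longrightarrow>
        ((\<lambda>y. - (A ** Pi y ** J ** H1 y) - Pi y ** J ** H0 y) has_integral (Pi x - Pi0)) {0..x}"
    and S_ode: "\<And>x. 0 \<le> x \<Longrightarrow> ereal x < l \<Longrightarrow>
        ((\<lambda>y. Pi y ** J ** H1 y ** cadj J ** cadj (Pi y)) has_integral (S x - S0)) {0..x}"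
begin

definition I :: "real set" where "I = {x. 0 \<le> x \<and> ereal x < l}"

definition Pi_rhs :: "real \<Rightarrow> complex^'m^'n" where
  "Pi_rhs y = - (A ** Pi y ** J ** H1 y) - Pi y ** J ** H0 y"

definition S_rhs :: "real \<Rightarrow> complex^'n^'n" where
  "S_rhs y = Pi y ** J ** H1 y ** cadj J ** cadj (Pi y)"

lemma I_downward_closed: "x \<in> I \<Longrightarrow> y \<in> {0..x} \<Longrightarrow> y \<in> I"
  unfolding I_def using le_less_trans[of "ereal y" "ereal x" l] by auto

lemma zero_in_I: "0 \<in> I"
  using l_pos by (simp add: I_def zero_ereal_def)

lemma Pi_eq: "x \<in> I \<Longrightarrow> Pi x = Pi0 + integral {0..x} Pi_rhs"
  and S_eq: "x \<in> I \<Longrightarrow> S x = S0 + integral {0..x} S_rhs"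
  using integral_unique[OF Pi_ode[of x]] integral_unique[OF S_ode[of x]]
  by (auto simp: I_def Pi_rhs_def[abs_def] S_rhs_def[abs_def])

lemma Pi_0: "Pi 0 = Pi0"
  using Pi_eq[OF zero_in_I] by simp

lemma Pi_rhs_absolutely_integrable: "x \<in> I \<Longrightarrow> Pi_rhs absolutely_integrable_on {0..x}"
  and S_rhs_absolutely_integrable: "x \<in> I \<Longrightarrow> S_rhs absolutely_integrable_on {0..x}"
proof -
  assume x: "x \<in> I"
  have "Pi_rhs integrable_on {0..x}"
    using Pi_ode[of x] x by (auto simp: I_def Pi_rhs_def[abs_def])
  then have Pi_cont: "continuous_on {0..x} Pi"
    using I_downward_closed[OF x] Pi_eq by (intro continuous_on_indefinite_integral_plus) auto
  have H1: "H1 absolutely_integrable_on {0..x}" and H0: "H0 absolutely_integrable_on {0..x}"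
    using H1_loc H0_loc x by (auto simp: I_def)
  have PJ: "continuous_on {0..x} (\<lambda>y. Pi y ** J)"
    and APJ: "continuous_on {0..x} (\<lambda>y. - (A ** Pi y ** J))"
    and JP: "continuous_on {0..x} (\<lambda>y. cadj J ** cadj (Pi y))"
    by (intro continuous_on_minus bounded_bilinear.continuous_on[OF bounded_bilinear_matrix_matrix_mult]
        bounded_linear.continuous_on[OF bounded_linear_cadj] continuous_on_const Pi_cont)+
  have PJH1: "(\<lambda>y. Pi y ** J ** H1 y) absolutely_integrable_on {0..x}"
    by (rule absolutely_integrable_bilinear_continuous[OF bilinear_matrix_matrix_mult PJ H1])
  show "Pi_rhs absolutely_integrable_on {0..x}"
    unfolding Pi_rhs_def[abs_def]
    using absolutely_integrable_bilinear_continuous[OF bilinear_matrix_matrix_mult APJ H1]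
      absolutely_integrable_bilinear_continuous[OF bilinear_matrix_matrix_mult PJ H0]
    by (auto simp: matrix_mult_uminus_left intro!: set_integral_diff(1))
  have "bilinear (\<lambda>(Q::complex^'n^'m) (P::complex^'m^'n). P ** Q)"
    using bilinear_matrix_matrix_mult unfolding bilinear_def by blast
  from absolutely_integrable_bilinear_continuous[OF this JP PJH1]
  show "S_rhs absolutely_integrable_on {0..x}"
    by (simp add: S_rhs_def[abs_def] matrix_mul_assoc)
qed

lemma S_hermitian:
  assumes "x \<in> I"
  shows "cadj (S x) = S x"
proof -
  have S_int: "(S_rhs has_integral S x - S0) {0..x}"
    using S_ode[of x] assms by (simp add: I_def S_rhs_def[abs_def])
  have "cadj (S_rhs y) = S_rhs y" if "y \<in> {0..x}" for y
    using H1_herm I_downward_closed[OF assms that]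
    by (simp add: I_def S_rhs_def cadj_mult cadj_cadj matrix_mul_assoc)
  from has_integral_eq[OF this has_integral_linear[OF S_int bounded_linear_cadj, unfolded o_def]]
  have "(S_rhs has_integral cadj (S x - S0)) {0..x}" .
  then have "cadj (S x - S0) = S x - S0"
    using S_int by (rule has_integral_unique)
  then show ?thesis
    by (simp add: cadj_diff S0_herm)
qed

lemma has_vector_derivative_ae_below:
  assumes "r \<in> I"
  obtains N where "negligible N" "\<And>x. x \<in> {0<..<r} \<Longrightarrow> x \<notin> N \<Longrightarrow>
    (Pi has_vector_derivative Pi_rhs x) (at x) \<and> (S has_vector_derivative S_rhs x) (at x)"
proof -
  obtain N1 N2 where "negligible N1" "negligible N2"
    and Pi': "\<And>x. x \<in> {0<..<r} \<Longrightarrow> x \<notin> N1 \<Longrightarrow>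
      ((\<lambda>y. integral {0..y} Pi_rhs) has_vector_derivative Pi_rhs x) (at x)"
    and S': "\<And>x. x \<in> {0<..<r} \<Longrightarrow> x \<notin> N2 \<Longrightarrow>
      ((\<lambda>y. integral {0..y} S_rhs) has_vector_derivative S_rhs x) (at x)"
    using indefinite_integral_has_vector_derivative_ae
      Pi_rhs_absolutely_integrable[OF assms] S_rhs_absolutely_integrable[OF assms]
      set_lebesgue_integral_eq_integral(1) by metis
  have "y \<in> I" if "y \<in> {0<..<r}" for y
    using I_downward_closed[OF assms, of y] that by auto
  then have Pi: "Pi0 + integral {0..y} Pi_rhs = Pi y" and S: "S0 + integral {0..y} S_rhs = S y"
    if "y \<in> {0<..<r}" for y
    using Pi_eq S_eq that by auto
  show ?thesis
  proof (rule that[OF negligible_Un[OF \<open>negligible N1\<close> \<open>negligible N2\<close>]])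
    fix x assume x: "x \<in> {0<..<r}" "x \<notin> N1 \<union> N2"
    show "(Pi has_vector_derivative Pi_rhs x) (at x) \<and> (S has_vector_derivative S_rhs x) (at x)"
    proof
      show "(Pi has_vector_derivative Pi_rhs x) (at x)"
        by (rule has_vector_derivative_transform_within_open[OF _ open_greaterThanLessThan x(1) Pi])
          (use Pi' x in \<open>auto intro!: derivative_eq_intros\<close>)
      show "(S has_vector_derivative S_rhs x) (at x)"
        by (rule has_vector_derivative_transform_within_open[OF _ open_greaterThanLessThan x(1) S])
          (use S' x in \<open>auto intro!: derivative_eq_intros\<close>)
    qed
  qed
qed

lemma ae_has_vector_derivative:
  "AE x in lborel. x \<in> I \<longrightarrow>
     (Pi has_vector_derivative Pi_rhs x) (at x) \<and> (S has_vector_derivative S_rhs x) (at x)"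
proof -
  have "\<exists>N. negligible N \<and> (r \<in> I \<longrightarrow> (\<forall>x\<in>{0<..<r} - N.
      (Pi has_vector_derivative Pi_rhs x) (at x) \<and> (S has_vector_derivative S_rhs x) (at x)))" for r
    by (cases "r \<in> I") (auto elim!: has_vector_derivative_ae_below)
  then obtain N where N: "\<And>r. negligible (N r)" and N_deriv: "\<And>r x. r \<in> I \<Longrightarrow> x \<in> {0<..<r} - N r \<Longrightarrow>
      (Pi has_vector_derivative Pi_rhs x) (at x) \<and> (S has_vector_derivative S_rhs x) (at x)"
    by metis
  have "negligible ({0} \<union> (\<Union>r\<in>\<rat>. N r))"
    using N by (intro negligible_Un negligible_countable_Union) (auto simp: countable_rat)
  then have "AE x in lebesgue. x \<notin> {0} \<union> (\<Union>r\<in>\<rat>. N r)"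
    unfolding negligible_iff_null_sets by (rule AE_not_in)
  then have "AE x in lborel. x \<notin> {0} \<union> (\<Union>r\<in>\<rat>. N r)"
    by (simp only: AE_completion_iff)
  then show ?thesis
  proof (rule AE_mp, intro AE_I2 impI)
    fix x assume x: "x \<notin> {0} \<union> (\<Union>r\<in>\<rat>. N r)" "x \<in> I"
    then have "0 < x" "ereal x < l"
      by (auto simp: I_def)
    then obtain y where "x < y" "ereal y < l"
      using ereal_dense2 by force
    then obtain r where "r \<in> \<rat>" "x < r" "r < y"
      using Rats_dense_in_real by blast
    have "ereal r < l"
      using less_trans[of "ereal r" "ereal y" l] \<open>r < y\<close> \<open>ereal y < l\<close> by simp
    then have "r \<in> I"
      using \<open>0 < x\<close> \<open>x < r\<close> by (simp add: I_def)
    moreover have "x \<in> {0<..<r} - N r"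
      using x(1) \<open>r \<in> \<rat>\<close> \<open>0 < x\<close> \<open>x < r\<close> by auto
    ultimately show "(Pi has_vector_derivative Pi_rhs x) (at x) \<and>
        (S has_vector_derivative S_rhs x) (at x)"
      by (rule N_deriv)
  qed
qed

lemma identity_preserved:
  assumes "x \<in> I"
  shows "A ** S x - S x ** cadj A = Pi x ** J ** cadj (Pi x)"
proof -
  note mm = bounded_bilinear_matrix_matrix_mult
  have PJP: "bounded_bilinear (\<lambda>(P::complex^'m^'n) (Q::complex^'m^'n). P ** J ** cadj Q)"
    unfolding bilinear_conv_bounded_bilinear[symmetric] bilinear_def linear_iff
    by (simp add: matrix_add_rdistrib matrix_add_ldistrib cadj_add cadj_scaleR matrix_mult_scaleR_right
        scalar_matrix_assoc[symmetric])
  have "0 \<le> x" using assms by (simp add: I_def)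
  have S_int: "(S_rhs has_integral S x - S0) {0..x}"
    using S_ode[of x] assms by (simp add: I_def S_rhs_def[abs_def])
  have "Pi y = Pi 0 + integral {0..y} Pi_rhs" if "y \<in> {0..x}" for y
    using Pi_eq I_downward_closed[OF assms that] by (simp add: Pi_0)
  from indefinite_integral_product_rule[OF PJP \<open>0 \<le> x\<close> Pi_rhs_absolutely_integrable[OF assms]
      Pi_rhs_absolutely_integrable[OF assms] this this]
  have product: "((\<lambda>y. Pi_rhs y ** J ** cadj (Pi y) + Pi y ** J ** cadj (Pi_rhs y)) has_integral
      Pi x ** J ** cadj (Pi x) - Pi0 ** J ** cadj Pi0) {0..x}"
    by (simp add: Pi_0)
  have "Pi_rhs y ** J ** cadj (Pi y) + Pi y ** J ** cadj (Pi_rhs y) = A ** S_rhs y - S_rhs y ** cadj A"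
    if "y \<in> {0..x}" for y
  proof -
    have "cadj (H1 y) = H1 y" "cadj (H0 y) = H0 y"
      using H1_herm H0_herm I_downward_closed[OF assms that] by (auto simp: I_def)
    then show ?thesis
      by (simp add: Pi_rhs_def S_rhs_def cadj_diff cadj_uminus cadj_mult J_skew matrix_mult_ring_simps
          matrix_mul_assoc algebra_simps)
  qed
  from has_integral_eq[OF this product]
  have "((\<lambda>y. A ** S_rhs y - S_rhs y ** cadj A) has_integral
      Pi x ** J ** cadj (Pi x) - Pi0 ** J ** cadj Pi0) {0..x}" .
  moreover have "((\<lambda>y. A ** S_rhs y - S_rhs y ** cadj A) has_integral
      A ** (S x - S0) - (S x - S0) ** cadj A) {0..x}"
    using has_integral_diff[OF has_integral_linear[OF S_int bounded_bilinear.bounded_linear_right[OF mm]]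
        has_integral_linear[OF S_int bounded_bilinear.bounded_linear_left[OF mm]]]
    by (simp add: o_def)
  ultimately have "Pi x ** J ** cadj (Pi x) - Pi0 ** J ** cadj Pi0
      = A ** (S x - S0) - (S x - S0) ** cadj A"
    by (rule has_integral_unique)
  then show ?thesis
    using identity by (simp add: matrix_mult_diff_left matrix_mult_diff_right algebra_simps)
qed

lemma transformed_solution_at:
  assumes "x \<in> I" "invertible (S x)"
    and "(Pi has_vector_derivative Pi_rhs x) (at x)" "(S has_vector_derivative S_rhs x) (at x)"
  shows "let z = (\<lambda>y t::real. J *v (cadj (Pi y) *v (matrix_inv (S y) *v (mexp ((- t) *\<^sub>R A) *v h))));
          X = J ** cadj (Pi x) ** matrix_inv (S x) ** Pi x;
          H0t = H0 x - cadj X ** H1 x - H1 x ** X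
      in \<forall>t::real. \<exists>zx zt.
           ((\<lambda>y. z y t) has_vector_derivative zx) (at x) \<and>
           ((\<lambda>s. z x s) has_vector_derivative zt) (at t) \<and>
           zx = J *v (- (H1 x *v zt) + H0t *v z x t)"
proof (rule transformed_solution_has_vector_derivative[where Pi=Pi and S=S and x=x])
  show "cadj (H1 x) = H1 x" "cadj (H0 x) = H0 x"
    using assms(1) H1_herm H0_herm by (auto simp: I_def)
qed (use assms J_skew S_hermitian identity_preserved in \<open>simp_all add: Pi_rhs_def S_rhs_def\<close>)

end

theorem proposition7p1:
  fixes l :: ereal
    and J :: "complex^'m^'m"
    and H1 H0 :: "real \<Rightarrow> complex^'m^'m"
    and A S0 :: "complex^'n^'n"
    and Pi0 :: "complex^'m^'n"
    and Pi :: "real \<Rightarrow> complex^'m^'n"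
    and S :: "real \<Rightarrow> complex^'n^'n"
    and h :: "complex^'n"
  assumes l_pos: "0 < l"
    and J_skew: "cadj J = - J"
    and H1_herm: "\<And>x. 0 \<le> x \<Longrightarrow> ereal x < l \<Longrightarrow> cadj (H1 x) = H1 x"
    and H0_herm: "\<And>x. 0 \<le> x \<Longrightarrow> ereal x < l \<Longrightarrow> cadj (H0 x) = H0 x"
    and H1_loc: "\<And>r. 0 \<le> r \<Longrightarrow> ereal r < l \<Longrightarrow> H1 absolutely_integrable_on {0..r}"
    and H0_loc: "\<And>r. 0 \<le> r \<Longrightarrow> ereal r < l \<Longrightarrow> H0 absolutely_integrable_on {0..r}"
    and S0_herm: "cadj S0 = S0"
    and identity: "A ** S0 - S0 ** cadj A = Pi0 ** J ** cadj Pi0"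
    and Pi_ode: "\<And>x. 0 \<le> x \<Longrightarrow> ereal x < l \<Longrightarrow>
        ((\<lambda>y. - (A ** Pi y ** J ** H1 y) - Pi y ** J ** H0 y) has_integral (Pi x - Pi0)) {0..x}"
    and S_ode: "\<And>x. 0 \<le> x \<Longrightarrow> ereal x < l \<Longrightarrow>
        ((\<lambda>y. Pi y ** J ** H1 y ** cadj J ** cadj (Pi y)) has_integral (S x - S0)) {0..x}"
  shows "AE x in lborel. 0 \<le> x \<and> ereal x < l \<and> invertible (S x) \<longrightarrow>
     (let z = (\<lambda>y t::real. J *v (cadj (Pi y) *v (matrix_inv (S y) *v (mexp ((- t) *\<^sub>R A) *v h))));
          X = J ** cadj (Pi x) ** matrix_inv (S x) ** Pi x;
          H0t = H0 x - cadj X ** H1 x - H1 x ** X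
      in \<forall>t::real. \<exists>zx zt.
           ((\<lambda>y. z y t) has_vector_derivative zx) (at x) \<and>
           ((\<lambda>s. z x s) has_vector_derivative zt) (at t) \<and>
           zx = J *v (- (H1 x *v zt) + H0t *v z x t))"
proof -
  interpret gbdt_system l J H1 H0 A S0 Pi0 Pi S
    by unfold_locales (fact assms)+
  show ?thesis
    using ae_has_vector_derivative
    by (rule AE_mp) (intro AE_I2 impI transformed_solution_at; simp add: I_def)
qed

end
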